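(* Let $X$ be a $K$-th order integrated process with generalized spectral density $f$, and assume (W1)–(W4) hold with some $M\ge K$. For $0\le u\le j$ and $\lambda\in(-\pi,\pi)$ define $$\mathbf D_{j,u}(\lambda;f)=\sum_{l=0}^{2^j-1}\mathbf e_u(\lambda+2l\pi)\,f(2^{-j}(\lambda+2l\pi))\,2^{-j/2}H_j(2^{-j}(\lambda+2l\pi))\,2^{-(j-u)/2}\overline{H_{j-u}(2^{-j}(\lambda+2l\pi))}.$$ Then for all $0\le u\le j$ and $k,k'\in\mathbb Z$, $$\mathrm{Cov}\big(W^X_{j,k},\mathbf W^X_{j,k'}(u)\big)=\int_{-\pi}^{\pi}e^{i\lambda(k-k')}\,\mathbf D_{j,u}(\lambda;f)\,d\lambda .$$ In particular, for every $j\ge0$ the process $(W^X_{j,k})_{k\in\mathbb Z}$ is covariance stationary with spectral density $\mathbf D_{j,0}(\cdot;f)$, and for $j\ge u>0$ the process $\big([W^X_{j,k},\mathbf W^X_{j,k}(u)^T]^T\big)_{k\in\mathbb Z}$ is covariance stationary with cross spectral density $\mathbf D_{j,u}(\cdot;f)$ between its scalar and vector components.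
   Context: Conditions on $\phi,\psi\in L^2(\mathbb R)$ (Fourier transform $\hat g(\xi)=\int g(t)e^{-i\xi t}dt$), integer $M\ge1$, $\alpha>1$: (W1) compactly supported, integrable, $\hat\phi(0)=1$, $\int\psi^2=1$; (W2) $\sup_\xi|\hat\psi(\xi)|(1+|\xi|)^\alpha<\infty$; (W3) $\int t^m\psi=0$, $m<M$; (W4) for $m<M$, $t\mapsto\sum_kk^m\phi(t-k)$ is a polynomial of degree $m$. $h_{j,l}=2^{-j/2}\int\phi(t+l)\psi(2^{-j}t)dt$, $H_j(\lambda)=\sum_lh_{j,l}e^{-i\lambda l}$. $\psi_{j,k}(t)=2^{-j/2}\psi(2^{-j}t-k)$, $\mathbf X(t)=\sum_kX_k\phi(t-k)$, $W^X_{j,k}=\int\mathbf X\psi_{j,k}$. For $0\le u\le j$, $\mathbf W^X_{j,k}(u)=[W^X_{j-u,2^uk},W^X_{j-u,2^uk+1},\dots,W^X_{j-u,2^uk+2^u-1}]^T$, and $\mathbf e_u(\xi)=2^{-u/2}[1,e^{-i2^{-u}\xi},\dots,e^{-i(2^u-1)2^{-u}\xi}]^T$. Spectral density convention: $\mathrm{Cov}(Y_{k+l},Y_l)=\int_{-\pi}^\pi e^{ik\lambda}g(\lambda)d\lambda$ (and analogously for cross spectral densities). $X$ is a $K$-th order integrated process with generalized spectral density $f$ if $\Delta^KX$ ($(\Delta X)_k=X_k-X_{k-1}$) is weakly stationary with spectral density $|1-e^{-i\lambda}|^{2K}f(\lambda)$. *)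

theory Defs
  imports "HOL-Probability.Probability" "HOL-Computational_Algebra.Polynomial"
begin

definition fourier :: "(real \<Rightarrow> real) \<Rightarrow> real \<Rightarrow> complex" where
  "fourier g \<xi> = (CLINT t|lborel. complex_of_real (g t) * exp (- \<i> * complex_of_real \<xi> * complex_of_real t))"

definition covar :: "'a measure \<Rightarrow> ('a \<Rightarrow> real) \<Rightarrow> ('a \<Rightarrow> real) \<Rightarrow> real" where
  "covar P Y Z = (\<integral>\<omega>. Y \<omega> * Z \<omega> \<partial>P) - (\<integral>\<omega>. Y \<omega> \<partial>P) * (\<integral>\<omega>. Z \<omega> \<partial>P)"

definition weakly_stationary_spectral ::
  "'a measure \<Rightarrow> (int \<Rightarrow> 'a \<Rightarrow> real) \<Rightarrow> (real \<Rightarrow> real) \<Rightarrow> bool" where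
  "weakly_stationary_spectral P Y g \<longleftrightarrow>
     (\<forall>k. Y k \<in> borel_measurable P \<and> integrable P (\<lambda>\<omega>. (Y k \<omega>)\<^sup>2)) \<and>
     (\<exists>\<mu>. \<forall>k. (\<integral>\<omega>. Y k \<omega> \<partial>P) = \<mu>) \<and>
     (\<forall>w\<in>{-pi..pi}. 0 \<le> g w) \<and> set_integrable lborel {-pi..pi} g \<and>
     (\<forall>k l. complex_of_real (covar P (Y (k + l)) (Y l)) =
        (CLBINT w=-pi..pi. exp (\<i> * of_int k * complex_of_real w) * complex_of_real (g w)))"

fun diff_iter :: "nat \<Rightarrow> (int \<Rightarrow> 'a \<Rightarrow> real) \<Rightarrow> int \<Rightarrow> 'a \<Rightarrow> real" where
  "diff_iter 0 X = X"
| "diff_iter (Suc n) X = (\<lambda>k \<omega>. diff_iter n X k \<omega> - diff_iter n X (k - 1) \<omega>)"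

(* X is a K-th order integrated process with generalized spectral density f
   (f is a non-negative function on the real line, viewed 2pi-periodically) *)
definition integrated_process_gsd ::
  "'a measure \<Rightarrow> (int \<Rightarrow> 'a \<Rightarrow> real) \<Rightarrow> nat \<Rightarrow> (real \<Rightarrow> real) \<Rightarrow> bool" where
  "integrated_process_gsd P X K f \<longleftrightarrow>
     (\<forall>k. X k \<in> borel_measurable P) \<and> (\<forall>w. 0 \<le> f w) \<and>
     weakly_stationary_spectral P (diff_iter K X)
        (\<lambda>w. (cmod (1 - exp (- \<i> * complex_of_real w))) ^ (2 * K) * f w)"

definition psi_jk :: "(real \<Rightarrow> real) \<Rightarrow> nat \<Rightarrow> int \<Rightarrow> real \<Rightarrow> real" where
  "psi_jk \<psi> j k t = 2 powr (- real j / 2) * \<psi> (2 powr (- real j) * t - real_of_int k)"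

definition cont_path :: "(int \<Rightarrow> 'a \<Rightarrow> real) \<Rightarrow> (real \<Rightarrow> real) \<Rightarrow> 'a \<Rightarrow> real \<Rightarrow> real" where
  "cont_path X \<phi> \<omega> t = (\<Sum>\<^sub>\<infinity>k::int. X k \<omega> * \<phi> (t - real_of_int k))"

definition wav_coef :: "(int \<Rightarrow> 'a \<Rightarrow> real) \<Rightarrow> (real \<Rightarrow> real) \<Rightarrow> (real \<Rightarrow> real) \<Rightarrow> nat \<Rightarrow> int \<Rightarrow> 'a \<Rightarrow> real" where
  "wav_coef X \<phi> \<psi> j k \<omega> = (\<integral>t. cont_path X \<phi> \<omega> t * psi_jk \<psi> j k t \<partial>lborel)"

definition filt_h :: "(real \<Rightarrow> real) \<Rightarrow> (real \<Rightarrow> real) \<Rightarrow> nat \<Rightarrow> int \<Rightarrow> real" where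
  "filt_h \<phi> \<psi> j l = 2 powr (- real j / 2) * (\<integral>t. \<phi> (t + real_of_int l) * \<psi> (2 powr (- real j) * t) \<partial>lborel)"

definition filt_H :: "(real \<Rightarrow> real) \<Rightarrow> (real \<Rightarrow> real) \<Rightarrow> nat \<Rightarrow> real \<Rightarrow> complex" where
  "filt_H \<phi> \<psi> j w = (\<Sum>\<^sub>\<infinity>l::int. complex_of_real (filt_h \<phi> \<psi> j l) *
      exp (- \<i> * complex_of_real w * of_int l))"

(* i-th component (0 \<le> i < 2^u) of D_{j,u}(w; f) *)
definition D_ju :: "(real \<Rightarrow> real) \<Rightarrow> (real \<Rightarrow> real) \<Rightarrow> (real \<Rightarrow> real) \<Rightarrow> nat \<Rightarrow> nat \<Rightarrow> nat \<Rightarrow> real \<Rightarrow> complex" where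
  "D_ju \<phi> \<psi> f j u i w =
     (\<Sum>l<(2::nat)^j.
        let \<zeta> = w + 2 * real l * pi; \<xi> = 2 powr (- real j) * \<zeta> in
        complex_of_real (2 powr (- real u / 2)) *
          exp (- \<i> * of_nat i * complex_of_real (2 powr (- real u) * \<zeta>)) *
        complex_of_real (f \<xi>) *
        complex_of_real (2 powr (- real j / 2)) * filt_H \<phi> \<psi> j \<xi> *
        complex_of_real (2 powr (- (real j - real u) / 2)) * cnj (filt_H \<phi> \<psi> (j - u) \<xi>))"

end

theory Submission
  imports Defs
begin

(* Since phi and psi have compact support, W_{j,k} is a finite filter
   sum_l h_{j,l} X_{2^j k - l} of the samples. By (W3) and (W4) the filter h_j annihilates
   polynomials of degree < M, so for K <= M it is the K-fold difference of a finitely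
   supported filter d_j. Hence W_{j,k} = sum_l d_{j,l} (Delta^K X)_{2^j k - l} is a filter of the
   stationary sequence Delta^K X, and H_j(w) = (1 - e^{-iw})^K D_j(w). The spectral
   representation of Delta^K X turns the covariance of two such filters into the integral over
   [-pi, pi] of e^{i(n - n') w} H_j(w) conj(H_{j-u}(w)) f(w); cutting [-pi, pi] into 2^j pieces and
   using 2 pi-periodicity folds this into the integral of e^{i(k - k') w} D_{j,u}(w; f). *)

section \<open>Finitely supported filters and iterated differences\<close>

definition vanishes_beyond :: "(int \<Rightarrow> 'b::zero) \<Rightarrow> int \<Rightarrow> bool" where
  "vanishes_beyond c N \<longleftrightarrow> (\<forall>l. N < \<bar>l\<bar> \<longrightarrow> c l = 0)"

definition backward_diff :: "(int \<Rightarrow> real) \<Rightarrow> int \<Rightarrow> real" where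
  "backward_diff d l = d l - d (l - 1)"

definition backward_diff_adjoint :: "(int \<Rightarrow> 'b::ab_group_add) \<Rightarrow> int \<Rightarrow> 'b" where
  "backward_diff_adjoint V l = V l - V (l + 1)"

lemma sum_vanishes_beyond_enlarge:
  fixes c :: "int \<Rightarrow> 'b::comm_monoid_add"
  assumes "vanishes_beyond c N" "N \<le> N'"
  shows "sum c {-N'..N'} = sum c {-N..N}"
  by (rule sum.mono_neutral_right) (use assms in \<open>auto simp: vanishes_beyond_def\<close>)

lemma vanishes_beyond_mult_right:
  fixes V :: "int \<Rightarrow> 'b::real_vector"
  shows "vanishes_beyond c N \<Longrightarrow> vanishes_beyond (\<lambda>l. c l *\<^sub>R V l) N"
  by (auto simp: vanishes_beyond_def)

lemma vanishes_beyond_backward_diff: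
  "vanishes_beyond d N \<Longrightarrow> 0 \<le> N \<Longrightarrow> vanishes_beyond (backward_diff d) (N + 1)"
  unfolding vanishes_beyond_def backward_diff_def by auto

lemma sum_backward_diff:
  fixes V :: "int \<Rightarrow> 'b::real_vector"
  assumes d: "vanishes_beyond d N" and "0 \<le> N"
  shows "(\<Sum>l\<in>{-(N+1)..N+1}. backward_diff d l *\<^sub>R V l) =
         (\<Sum>l\<in>{-N..N}. d l *\<^sub>R backward_diff_adjoint V l)"
proof -
  have "(\<Sum>l\<in>{-(N+1)..N+1}. d (l - 1) *\<^sub>R V l) = (\<Sum>l\<in>{-(N+2)..N}. d l *\<^sub>R V (l + 1))"
    by (rule sum.reindex_bij_witness[where i="\<lambda>l. l + 1" and j="\<lambda>l. l - 1"]) auto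
  also have "\<dots> = (\<Sum>l\<in>{-N..N}. d l *\<^sub>R V (l + 1))"
    by (rule sum.mono_neutral_right) (use assms in \<open>auto simp: vanishes_beyond_def\<close>)
  finally have shifted: "(\<Sum>l\<in>{-(N+1)..N+1}. d (l - 1) *\<^sub>R V l) = (\<Sum>l\<in>{-N..N}. d l *\<^sub>R V (l + 1))" .
  have "(\<Sum>l\<in>{-(N+1)..N+1}. d l *\<^sub>R V l) = (\<Sum>l\<in>{-N..N}. d l *\<^sub>R V l)"
    using sum_vanishes_beyond_enlarge[OF vanishes_beyond_mult_right[OF d], of "N + 1"] by simp
  with shifted show ?thesis
    by (simp add: backward_diff_def backward_diff_adjoint_def scaleR_diff_left scaleR_diff_right
        sum_subtractf)
qed

lemma sum_backward_diff_pow: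
  fixes V :: "int \<Rightarrow> 'b::real_vector"
  assumes "vanishes_beyond d N" "0 \<le> N"
  shows "(\<Sum>l\<in>{-(N + int K)..N + int K}. (backward_diff ^^ K) d l *\<^sub>R V l) =
         (\<Sum>l\<in>{-N..N}. d l *\<^sub>R (backward_diff_adjoint ^^ K) V l)"
  using assms
proof (induction K arbitrary: d N V)
  case 0
  then show ?case by simp
next
  case (Suc K)
  have "(\<Sum>l\<in>{-(N + int (Suc K))..N + int (Suc K)}. (backward_diff ^^ Suc K) d l *\<^sub>R V l)
      = (\<Sum>l\<in>{-((N + 1) + int K)..(N + 1) + int K}. (backward_diff ^^ K) (backward_diff d) l *\<^sub>R V l)"
    by (simp only: funpow_Suc_right comp_def) (simp add: add_ac)
  also have "\<dots> = (\<Sum>l\<in>{-(N+1)..N+1}. backward_diff d l *\<^sub>R (backward_diff_adjoint ^^ K) V l)"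
    using Suc.IH[OF vanishes_beyond_backward_diff[OF Suc.prems]] Suc.prems(2) by simp
  also have "\<dots> = (\<Sum>l\<in>{-N..N}. d l *\<^sub>R (backward_diff_adjoint ^^ Suc K) V l)"
    using sum_backward_diff[OF Suc.prems] by simp
  finally show ?case .
qed

lemma backward_diff_adjoint_pow_reflected:
  "(backward_diff_adjoint ^^ K) (\<lambda>l. X (n - l) \<omega>) = (\<lambda>l. diff_iter K X (n - l) \<omega>)"
  by (induction K) (auto simp: backward_diff_adjoint_def algebra_simps)

lemma backward_diff_adjoint_pow_exp:
  "(backward_diff_adjoint ^^ K) (\<lambda>l. exp (- \<i> * of_real w * of_int l)) =
   (\<lambda>l. (1 - exp (- \<i> * of_real w)) ^ K * exp (- \<i> * of_real w * of_int l))"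
proof (induction K)
  case 0
  then show ?case by simp
next
  case (Suc K)
  have "exp (- \<i> * of_real w * of_int (l + 1)) =
      exp (- \<i> * of_real w * of_int l) * exp (- \<i> * of_real w)"
    for l :: int
    by (simp add: exp_add[symmetric] algebra_simps)
  with Suc show ?case
    by (simp add: backward_diff_adjoint_def algebra_simps)
qed

lemma moment_backward_diff:
  assumes "vanishes_beyond d N" "0 \<le> N"
  shows "(\<Sum>l\<in>{-(N+1)..N+1}. backward_diff d l * of_int l ^ Suc m) =
         - (\<Sum>r\<le>m. of_nat (Suc m choose r) * (\<Sum>l\<in>{-N..N}. d l * of_int l ^ r))"
proof -
  have binomial: "of_int l ^ Suc m - of_int (l + 1) ^ Suc m =
      - (\<Sum>r\<le>m. of_nat (Suc m choose r) * (of_int l :: real) ^ r)" for l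
    using binomial_ring[of "of_int l :: real" 1 "Suc m"] by (simp add: mult_ac)
  have "(\<Sum>l\<in>{-(N+1)..N+1}. backward_diff d l * of_int l ^ Suc m) =
      (\<Sum>l\<in>{-N..N}. d l * (of_int l ^ Suc m - of_int (l + 1) ^ Suc m))"
    using sum_backward_diff[OF assms, of "\<lambda>l. real_of_int l ^ Suc m"]
    by (simp add: backward_diff_adjoint_def)
  also have "\<dots> = - (\<Sum>r\<le>m. of_nat (Suc m choose r) * (\<Sum>l\<in>{-N..N}. d l * of_int l ^ r))"
    unfolding binomial mult_minus_right sum_negf sum_distrib_left
    by (subst sum.swap) (simp add: mult_ac)
  finally show ?thesis .
qed

lemma backward_diff_moments_zero_imp_moments_zero:
  assumes "vanishes_beyond d N" "0 \<le> N"
    and "\<forall>m\<le>K. (\<Sum>l\<in>{-(N+1)..N+1}. backward_diff d l * of_int l ^ m) = 0"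
  shows "\<forall>m<K. (\<Sum>l\<in>{-N..N}. d l * of_int l ^ m) = 0"
proof (intro allI impI)
  fix m assume "m < K"
  then show "(\<Sum>l\<in>{-N..N}. d l * of_int l ^ m) = 0"
  proof (induction m rule: less_induct)
    case (less m)
    have "(\<Sum>r<m. of_nat (Suc m choose r) * (\<Sum>l\<in>{-N..N}. d l * of_int l ^ r)) = (0::real)"
      using less.IH less.prems by (intro sum.neutral) auto
    then have "- (of_nat (Suc m) * (\<Sum>l\<in>{-N..N}. d l * of_int l ^ m)) =
        - (\<Sum>r\<le>m. of_nat (Suc m choose r) * (\<Sum>l\<in>{-N..N}. d l * of_int l ^ r))"
      by (simp add: lessThan_Suc_atMost[symmetric])
    also have "\<dots> = (\<Sum>l\<in>{-(N+1)..N+1}. backward_diff d l * of_int l ^ Suc m)"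
      by (rule moment_backward_diff[OF assms(1,2), symmetric])
    also have "\<dots> = 0"
      using assms(3)[rule_format, of "Suc m"] less.prems by simp
    finally show ?case by simp
  qed
qed

lemma backward_diff_partial_sums:
  assumes c: "vanishes_beyond c N" and total: "(\<Sum>l\<in>{-N..N}. c l) = 0"
  defines "d \<equiv> \<lambda>l. \<Sum>s\<in>{-N..l}. c s"
  shows "vanishes_beyond d N" and "backward_diff d = c"
proof -
  show "vanishes_beyond d N"
    unfolding vanishes_beyond_def
  proof (intro allI impI)
    fix l assume l: "N < \<bar>l\<bar>"
    show "d l = 0"
    proof (cases "l < -N")
      case False
      then have "d l = (\<Sum>s\<in>{-N..N}. c s)"
        unfolding d_def using l c by (intro sum.mono_neutral_right) (auto simp: vanishes_beyond_def)
      then show ?thesis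
        using total by simp
    qed (simp add: d_def)
  qed
  show "backward_diff d = c"
  proof
    fix l
    show "backward_diff d l = c l"
    proof (cases "l < -N")
      case True
      then show ?thesis
        using c by (auto simp: backward_diff_def d_def vanishes_beyond_def)
    next
      case False
      then have "{-N..l} = insert l {-N..l - 1}" by auto
      then show ?thesis
        by (simp add: backward_diff_def d_def)
    qed
  qed
qed

lemma vanishing_moments_imp_backward_diff_pow:
  assumes "vanishes_beyond c N" "0 \<le> N" "\<forall>m<K. (\<Sum>l\<in>{-N..N}. c l * of_int l ^ m) = 0"
  shows "\<exists>d. vanishes_beyond d N \<and> (backward_diff ^^ K) d = c"
  using assms
proof (induction K arbitrary: c)
  case 0
  then show ?case by auto
next
  case (Suc K)
  define d where "d l = (\<Sum>s\<in>{-N..l}. c s)" for l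
  have "(\<Sum>l\<in>{-N..N}. c l) = 0"
    using Suc.prems(3) by auto
  note partial_sums = backward_diff_partial_sums[OF Suc.prems(1) this, folded d_def]
  have "\<forall>m\<le>K. (\<Sum>l\<in>{-(N+1)..N+1}. backward_diff d l * of_int l ^ m) = 0"
  proof (intro allI impI)
    fix m assume "m \<le> K"
    have "(\<Sum>l\<in>{-(N+1)..N+1}. c l * of_int l ^ m) = (\<Sum>l\<in>{-N..N}. c l * of_int l ^ m)"
      using sum_vanishes_beyond_enlarge[OF vanishes_beyond_mult_right[OF Suc.prems(1)], of "N + 1"
          "\<lambda>l. real_of_int l ^ m"] by simp
    then show "(\<Sum>l\<in>{-(N+1)..N+1}. backward_diff d l * of_int l ^ m) = 0"
      using Suc.prems(3) \<open>m \<le> K\<close> by (simp add: partial_sums(2))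
  qed
  from backward_diff_moments_zero_imp_moments_zero[OF partial_sums(1) Suc.prems(2) this]
  obtain e where "vanishes_beyond e N" "(backward_diff ^^ K) e = d"
    using Suc.IH[OF partial_sums(1) Suc.prems(2)] by blast
  with partial_sums(2) show ?case
    by (intro exI[of _ e]) (simp add: funpow_Suc_right)
qed

section \<open>Covariance of filtered stationary sequences\<close>

lemma integrable_mult_if_square_integrable:
  fixes f g :: "'a \<Rightarrow> real"
  assumes [measurable]: "f \<in> borel_measurable M" "g \<in> borel_measurable M"
    and "integrable M (\<lambda>x. (f x)\<^sup>2)" "integrable M (\<lambda>x. (g x)\<^sup>2)"
  shows "integrable M (\<lambda>x. f x * g x)"
proof (rule Bochner_Integration.integrable_bound)
  show "integrable M (\<lambda>x. (f x)\<^sup>2 + (g x)\<^sup>2)"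
    using assms by simp
  have "\<bar>a * b\<bar> \<le> a\<^sup>2 + b\<^sup>2" for a b :: real
  proof -
    have "2 * \<bar>a\<bar> * \<bar>b\<bar> \<le> a\<^sup>2 + b\<^sup>2"
      using sum_squares_bound[of "\<bar>a\<bar>" "\<bar>b\<bar>"] by simp
    moreover have "0 \<le> \<bar>a\<bar> * \<bar>b\<bar>" by simp
    ultimately show ?thesis unfolding abs_mult by linarith
  qed
  then show "AE x in M. norm (f x * g x) \<le> norm ((f x)\<^sup>2 + (g x)\<^sup>2)"
    by simp
qed measurable

lemma covar_sum:
  assumes "prob_space P" and [measurable]: "\<And>k. Y k \<in> borel_measurable P"
    and square_integrable: "\<And>k. integrable P (\<lambda>\<omega>. (Y k \<omega>)\<^sup>2)"
  shows "covar P (\<lambda>\<omega>. \<Sum>a\<in>A. \<alpha> a * Y (p a) \<omega>) (\<lambda>\<omega>. \<Sum>b\<in>B. \<beta> b * Y (q b) \<omega>) =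
         (\<Sum>a\<in>A. \<Sum>b\<in>B. \<alpha> a * \<beta> b * covar P (Y (p a)) (Y (q b)))"
proof -
  interpret prob_space P by fact
  have integrable: "integrable P (Y k)" for k
    by (rule square_integrable_imp_integrable) (use square_integrable in auto)
  have "(\<integral>\<omega>. (\<Sum>a\<in>A. \<alpha> a * Y (p a) \<omega>) * (\<Sum>b\<in>B. \<beta> b * Y (q b) \<omega>) \<partial>P)
      = (\<integral>\<omega>. (\<Sum>a\<in>A. \<Sum>b\<in>B. \<alpha> a * \<beta> b * (Y (p a) \<omega> * Y (q b) \<omega>)) \<partial>P)"
    by (simp add: sum_product mult_ac)
  also have "\<dots> = (\<Sum>a\<in>A. \<Sum>b\<in>B. \<alpha> a * \<beta> b * (\<integral>\<omega>. Y (p a) \<omega> * Y (q b) \<omega> \<partial>P))"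
    using square_integrable
    by (simp add: integral_sum integrable_sum integrable_mult_if_square_integrable)
  finally show ?thesis
    unfolding covar_def using integrable
    by (simp add: integral_sum sum_product sum_subtractf[symmetric] right_diff_distrib mult_ac)
qed

lemma set_integrable_sum:
  fixes f :: "'i \<Rightarrow> 'a \<Rightarrow> 'b::{banach, second_countable_topology}"
  assumes "\<And>i. i \<in> I \<Longrightarrow> set_integrable M S (f i)"
  shows "set_integrable M S (\<lambda>x. \<Sum>i\<in>I. f i x)"
  using assms unfolding set_integrable_def scaleR_sum_right by (simp add: integrable_sum)

lemma set_integral_sum:
  fixes f :: "'i \<Rightarrow> 'a \<Rightarrow> 'b::{banach, second_countable_topology}"
  assumes "\<And>i. i \<in> I \<Longrightarrow> set_integrable M S (f i)"
  shows "(LINT x:S|M. (\<Sum>i\<in>I. f i x)) = (\<Sum>i\<in>I. LINT x:S|M. f i x)"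
  using assms unfolding set_integrable_def set_lebesgue_integral_def scaleR_sum_right
  by (simp add: integral_sum)

lemma set_integrable_exp_mult:
  fixes g :: "real \<Rightarrow> real"
  assumes "set_integrable lborel S g"
  shows "set_integrable lborel S (\<lambda>w. exp (\<i> * of_int m * of_real w) * of_real (g w))"
proof (rule set_integrable_bound)
  show "set_integrable lborel S (\<lambda>w. of_real (g w) :: complex)"
    using assms unfolding set_integrable_def
    by (simp add: complex_of_real_integrable_eq[symmetric] scaleR_conv_of_real)
  have [measurable]: "(\<lambda>w. indicator S w *\<^sub>R g w) \<in> borel_measurable lborel"
    using assms unfolding set_integrable_def by (rule borel_measurable_integrable)
  have "(\<lambda>w. exp (\<i> * of_int m * of_real w) * of_real (indicator S w *\<^sub>R g w))
      \<in> borel_measurable lborel"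
    by measurable
  then show "set_borel_measurable lborel S (\<lambda>w. exp (\<i> * of_int m * of_real w) * of_real (g w))"
    unfolding set_borel_measurable_def by (simp add: scaleR_conv_of_real mult_ac)
qed (simp add: norm_mult)

definition freq_response :: "(int \<Rightarrow> real) \<Rightarrow> int set \<Rightarrow> real \<Rightarrow> complex" where
  "freq_response c A w = (\<Sum>l\<in>A. of_real (c l) * exp (- \<i> * of_real w * of_int l))"

lemma sum_sum_exp_eq_freq_response:
  "(\<Sum>a\<in>A. \<Sum>b\<in>B. of_real (\<alpha> a * \<beta> b) * exp (\<i> * of_int ((n - a) - (n' - b)) * of_real w)) =
   exp (\<i> * of_int (n - n') * of_real w) * freq_response \<alpha> A w * cnj (freq_response \<beta> B w)"
proof -
  let ?E = "\<lambda>l::int. exp (- \<i> * of_real w * of_int l)"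
  have "(\<Sum>a\<in>A. \<Sum>b\<in>B. of_real (\<alpha> a * \<beta> b) * exp (\<i> * of_int ((n - a) - (n' - b)) * of_real w)) =
      (\<Sum>a\<in>A. \<Sum>b\<in>B. exp (\<i> * of_int (n - n') * of_real w) *
         ((of_real (\<alpha> a) * ?E a) * cnj (of_real (\<beta> b) * ?E b)))"
    by (intro sum.cong refl) (simp add: exp_cnj exp_add[symmetric] algebra_simps)
  also have "\<dots> = exp (\<i> * of_int (n - n') * of_real w) *
      ((\<Sum>a\<in>A. of_real (\<alpha> a) * ?E a) * (\<Sum>b\<in>B. cnj (of_real (\<beta> b) * ?E b)))"
    unfolding sum_product unfolding sum_distrib_left ..
  finally show ?thesis
    by (simp add: freq_response_def cnj_sum mult.assoc)
qed

lemma covar_filtered_stationary: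
  fixes \<alpha> \<beta> :: "int \<Rightarrow> real" and A B :: "int set" and n n' :: int
  assumes P: "prob_space P" and Y: "weakly_stationary_spectral P Y g"
  defines "F \<equiv> \<lambda>w. exp (\<i> * of_int (n - n') * of_real w) * freq_response \<alpha> A w *
                    cnj (freq_response \<beta> B w) * of_real (g w)"
  shows "set_integrable lborel {-pi..pi} F"
    and "of_real (covar P (\<lambda>\<omega>. \<Sum>a\<in>A. \<alpha> a * Y (n - a) \<omega>) (\<lambda>\<omega>. \<Sum>b\<in>B. \<beta> b * Y (n' - b) \<omega>)) =
         (CLBINT w=-pi..pi. F w)"
proof -
  have Y_measurable: "\<And>k. Y k \<in> borel_measurable P"
    and Y_square: "\<And>k. integrable P (\<lambda>\<omega>. (Y k \<omega>)\<^sup>2)"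
    and g_integrable: "set_integrable lborel {-pi..pi} g"
    and spectral: "\<And>k l. of_real (covar P (Y (k + l)) (Y l)) =
        (CLBINT w=-pi..pi. exp (\<i> * of_int k * of_real w) * of_real (g w))"
    using Y unfolding weakly_stationary_spectral_def by auto
  define T where "T a b w = of_real (\<alpha> a * \<beta> b) *
      (exp (\<i> * of_int ((n - a) - (n' - b)) * of_real w) * of_real (g w))" for a b w
  have F_expand: "F = (\<lambda>w. \<Sum>a\<in>A. \<Sum>b\<in>B. T a b w)"
    unfolding F_def T_def sum_sum_exp_eq_freq_response[symmetric]
    by (simp add: sum_distrib_right mult.assoc)
  have T_integrable: "set_integrable lborel {-pi..pi} (T a b)" for a b
    unfolding T_def by (intro set_integrable_mult_right set_integrable_exp_mult g_integrable)
  then show "set_integrable lborel {-pi..pi} F"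
    unfolding F_expand by (intro set_integrable_sum)
  have "of_real (covar P (\<lambda>\<omega>. \<Sum>a\<in>A. \<alpha> a * Y (n - a) \<omega>) (\<lambda>\<omega>. \<Sum>b\<in>B. \<beta> b * Y (n' - b) \<omega>)) =
      (\<Sum>a\<in>A. \<Sum>b\<in>B. of_real (\<alpha> a * \<beta> b) * of_real (covar P (Y (n - a)) (Y (n' - b))))"
    by (subst covar_sum[OF P Y_measurable Y_square]) simp
  also have "\<dots> = (\<Sum>a\<in>A. \<Sum>b\<in>B. LINT w:{-pi..pi}|lborel. T a b w)"
  proof (intro sum.cong refl)
    fix a b
    have "of_real (covar P (Y (n - a)) (Y (n' - b))) =
        (CLBINT w=-pi..pi. exp (\<i> * of_int ((n - a) - (n' - b)) * of_real w) * of_real (g w))"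
      using spectral[of "(n - a) - (n' - b)" "n' - b"] by simp
    then show "of_real (\<alpha> a * \<beta> b) * of_real (covar P (Y (n - a)) (Y (n' - b))) =
        (LINT w:{-pi..pi}|lborel. T a b w)"
      unfolding T_def by (simp add: interval_integral_Icc)
  qed
  also have "\<dots> = (LINT w:{-pi..pi}|lborel. F w)"
    unfolding F_expand using T_integrable
    by (simp add: set_integral_sum set_integrable_sum)
  also have "\<dots> = (CLBINT w=-pi..pi. F w)"
    by (simp add: interval_integral_Icc)
  finally show "of_real (covar P (\<lambda>\<omega>. \<Sum>a\<in>A. \<alpha> a * Y (n - a) \<omega>) (\<lambda>\<omega>. \<Sum>b\<in>B. \<beta> b * Y (n' - b) \<omega>)) =
      (CLBINT w=-pi..pi. F w)" .
qed

lemma of_real_norm_power_even: "of_real (cmod z ^ (2 * K)) = z ^ K * cnj (z ^ K)"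
proof -
  have "of_real (cmod z ^ (2 * K)) = (of_real ((cmod z)\<^sup>2) :: complex) ^ K"
    by (simp add: power_mult)
  also have "\<dots> = z ^ K * cnj (z ^ K)"
    by (simp only: complex_norm_square power_mult_distrib complex_cnj_power)
  finally show ?thesis .
qed

section \<open>Compactly supported wavelets\<close>

lemma two_powr_neg: "(2::real) powr (- real j) = inverse (2 ^ j)"
  by (simp add: powr_minus powr_realpow)

locale compact_wavelet =
  fixes \<phi> \<psi> :: "real \<Rightarrow> real" and a :: real
  assumes radius_nonneg: "0 \<le> a"
    and support: "\<And>t. a < \<bar>t\<bar> \<Longrightarrow> \<phi> t = 0 \<and> \<psi> t = 0"
    and integrable_phi: "integrable lborel \<phi>" and integrable_psi: "integrable lborel \<psi>"
    and square_integrable_phi: "integrable lborel (\<lambda>t. (\<phi> t)\<^sup>2)"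
    and square_integrable_psi: "integrable lborel (\<lambda>t. (\<psi> t)\<^sup>2)"
begin

lemma phi_measurable [measurable]: "\<phi> \<in> borel_measurable borel"
  using borel_measurable_integrable[OF integrable_phi] by simp

lemma psi_measurable [measurable]: "\<psi> \<in> borel_measurable borel"
  using borel_measurable_integrable[OF integrable_psi] by simp

definition filter_radius :: "nat \<Rightarrow> int" where
  "filter_radius j = \<lceil>a + 2 ^ j * a\<rceil>"

lemma filter_radius_ge: "a + 2 ^ j * a \<le> of_int (filter_radius j)"
  unfolding filter_radius_def by simp

lemma filter_radius_nonneg: "0 \<le> filter_radius j"
proof -
  have "0 \<le> 2 ^ j * a"
    using radius_nonneg by simp
  with radius_nonneg show ?thesis
    unfolding filter_radius_def by linarith
qed

lemma scaled_psi_support: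
  assumes "\<psi> (2 powr (- real j) * t - b) \<noteq> 0"
  shows "\<bar>t - 2 ^ j * b\<bar> \<le> 2 ^ j * a"
proof -
  have "\<bar>inverse (2 ^ j) * t - b\<bar> \<le> a"
    using support[of "2 powr (- real j) * t - b"] assms unfolding two_powr_neg by force
  then have "\<bar>2 ^ j * (inverse (2 ^ j) * t - b)\<bar> \<le> 2 ^ j * a"
    by (simp add: abs_mult)
  then show ?thesis
    by (simp add: algebra_simps)
qed

lemma infsum_phi_shifts_eq_sum:
  assumes "\<bar>s - of_int n\<bar> \<le> 2 ^ j * a"
  shows "(\<Sum>\<^sub>\<infinity>k::int. c k * \<phi> (s - of_int k)) =
         (\<Sum>l\<in>{-filter_radius j..filter_radius j}. c (n - l) * \<phi> (s - of_int (n - l)))"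
proof -
  let ?R = "filter_radius j"
  have "c k * \<phi> (s - of_int k) = 0" if "k \<notin> {n - ?R..n + ?R}" for k
  proof -
    have "a + 2 ^ j * a < \<bar>of_int k - of_int n\<bar>"
      using that filter_radius_ge[of j] by auto
    then have "a < \<bar>s - of_int k\<bar>"
      using assms by linarith
    then show ?thesis
      using support by simp
  qed
  then have "(\<Sum>\<^sub>\<infinity>k::int. c k * \<phi> (s - of_int k)) = (\<Sum>k\<in>{n - ?R..n + ?R}. c k * \<phi> (s - of_int k))"
    by (subst infsum_cong_neutral[where T="{n - ?R..n + ?R}"]) auto
  also have "\<dots> = (\<Sum>l\<in>{-?R..?R}. c (n - l) * \<phi> (s - of_int (n - l)))"
    by (rule sum.reindex_bij_witness[where i="\<lambda>l. n - l" and j="\<lambda>k. n - k"]) auto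
  finally show ?thesis .
qed

lemma integrable_phi_shift_mult_psi_affine:
  assumes "c \<noteq> 0"
  shows "integrable lborel (\<lambda>s. \<phi> (b + s) * \<psi> (b' + c * s))"
proof (rule integrable_mult_if_square_integrable)
  show "integrable lborel (\<lambda>s. (\<phi> (b + s))\<^sup>2)"
    using lborel_integrable_real_affine[OF square_integrable_phi, of 1 b] by simp
  show "integrable lborel (\<lambda>s. (\<psi> (b' + c * s))\<^sup>2)"
    using lborel_integrable_real_affine[OF square_integrable_psi, of c b'] assms by simp
qed measurable

lemma filt_h_vanishes_beyond: "vanishes_beyond (filt_h \<phi> \<psi> j) (filter_radius j)"
  unfolding vanishes_beyond_def
proof (intro allI impI)
  fix l :: int
  assume l: "filter_radius j < \<bar>l\<bar>"
  have "(\<lambda>t. \<phi> (t + of_int l) * \<psi> (2 powr (- real j) * t)) = (\<lambda>t. 0)"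
  proof (rule ext, rule ccontr)
    fix t
    assume "\<phi> (t + of_int l) * \<psi> (2 powr (- real j) * t) \<noteq> 0"
    then have "\<bar>t + of_int l\<bar> \<le> a" and "\<bar>t\<bar> \<le> 2 ^ j * a"
      using support[of "t + of_int l"] scaled_psi_support[of j t 0] by force+
    then show False
      using filter_radius_ge[of j] l by linarith
  qed
  then show "filt_h \<phi> \<psi> j l = 0"
    unfolding filt_h_def by simp
qed

lemma filt_H_eq_freq_response:
  "filt_H \<phi> \<psi> j w = freq_response (filt_h \<phi> \<psi> j) {-filter_radius j..filter_radius j} w"
  unfolding filt_H_def freq_response_def using filt_h_vanishes_beyond[of j]
  by (subst infsum_cong_neutral[where T="{-filter_radius j..filter_radius j}"])
     (auto simp: vanishes_beyond_def)

lemma wav_coef_eq_filter: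
  "wav_coef X \<phi> \<psi> j k \<omega> =
   (\<Sum>l\<in>{-filter_radius j..filter_radius j}. filt_h \<phi> \<psi> j l * X (2 ^ j * k - l) \<omega>)"
proof -
  define R where "R = filter_radius j"
  define n where "n = (2::int) ^ j * k"
  have pointwise: "cont_path X \<phi> \<omega> s * psi_jk \<psi> j k s =
      (\<Sum>l\<in>{-R..R}. X (n - l) \<omega> * (\<phi> (s - of_int (n - l)) * psi_jk \<psi> j k s))" for s
  proof (cases "\<psi> (2 powr (- real j) * s - of_int k) = 0")
    case False
    then have "\<bar>s - of_int n\<bar> \<le> 2 ^ j * a"
      using scaled_psi_support by (simp add: n_def)
    from infsum_phi_shifts_eq_sum[OF this, of "\<lambda>k. X k \<omega>"] show ?thesis
      unfolding cont_path_def R_def by (simp add: sum_distrib_right mult.assoc)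
  qed (simp add: psi_jk_def)
  have integral_term: "(\<integral>s. \<phi> (s - of_int (n - l)) * psi_jk \<psi> j k s \<partial>lborel) = filt_h \<phi> \<psi> j l" for l
  proof -
    have "(\<integral>s. \<phi> (s - of_int (n - l)) * psi_jk \<psi> j k s \<partial>lborel)
        = (\<integral>x. \<phi> ((of_int n + 1 * x) - of_int (n - l)) * psi_jk \<psi> j k (of_int n + 1 * x) \<partial>lborel)"
      using lborel_integral_real_affine[of 1 "\<lambda>s. \<phi> (s - of_int (n - l)) * psi_jk \<psi> j k s" "of_int n"]
      by simp
    also have "\<dots> = (\<integral>x. 2 powr (- real j / 2) * (\<phi> (x + of_int l) * \<psi> (2 powr (- real j) * x)) \<partial>lborel)"
      unfolding psi_jk_def n_def two_powr_neg by (simp add: algebra_simps)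
    finally show ?thesis
      unfolding filt_h_def by simp
  qed
  have integrable: "integrable lborel (\<lambda>s. \<phi> (s - of_int (n - l)) * psi_jk \<psi> j k s)" for l
    using integrable_mult_right[OF integrable_phi_shift_mult_psi_affine, of "2 powr (- real j / 2)"
        "2 powr (- real j)" "of_int (l - n)" "- of_int k"]
    unfolding psi_jk_def by (simp add: algebra_simps)
  have "wav_coef X \<phi> \<psi> j k \<omega> =
      (\<Sum>l\<in>{-R..R}. X (n - l) \<omega> * (\<integral>s. \<phi> (s - of_int (n - l)) * psi_jk \<psi> j k s \<partial>lborel))"
    unfolding wav_coef_def pointwise using integrable by (simp add: integral_sum)
  also have "\<dots> = (\<Sum>l\<in>{-R..R}. filt_h \<phi> \<psi> j l * X (n - l) \<omega>)"
    unfolding integral_term by (simp add: mult.commute)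
  finally show ?thesis
    unfolding R_def n_def .
qed

lemma psi_moment_integrable: "integrable lborel (\<lambda>t. t ^ r * \<psi> t)"
proof (rule Bochner_Integration.integrable_bound)
  show "integrable lborel (\<lambda>t. a ^ r * \<psi> t)"
    using integrable_psi by simp
  have "\<bar>t ^ r * \<psi> t\<bar> \<le> \<bar>a ^ r * \<psi> t\<bar>" for t
  proof (cases "a < \<bar>t\<bar>")
    case False
    then have "\<bar>t\<bar> ^ r \<le> a ^ r"
      by (intro power_mono) auto
    then show ?thesis
      using radius_nonneg by (simp add: abs_mult power_abs mult_right_mono)
  qed (use support in simp)
  then show "AE t in lborel. norm (t ^ r * \<psi> t) \<le> norm (a ^ r * \<psi> t)"
    by simp
qed measurable

lemma integral_poly_mult_psi_scaled:
  assumes "degree p \<le> m" and moments: "\<forall>r\<le>m. (\<integral>t. t ^ r * \<psi> t \<partial>lborel) = 0"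
  shows "(\<integral>t. poly p t * \<psi> (2 powr (- real j) * t) \<partial>lborel) = 0"
proof -
  have "(\<integral>t. poly p t * \<psi> (2 powr (- real j) * t) \<partial>lborel) =
      2 ^ j * (\<integral>x. poly p (0 + 2 ^ j * x) * \<psi> (2 powr (- real j) * (0 + 2 ^ j * x)) \<partial>lborel)"
    using lborel_integral_real_affine[of "2 ^ j" "\<lambda>t. poly p t * \<psi> (2 powr (- real j) * t)" 0] by simp
  also have "(\<lambda>x. poly p (0 + 2 ^ j * x) * \<psi> (2 powr (- real j) * (0 + 2 ^ j * x))) =
      (\<lambda>x. \<Sum>r\<le>degree p. (coeff p r * (2 ^ j) ^ r) * (x ^ r * \<psi> x))"
    unfolding two_powr_neg poly_altdef
    by (simp add: sum_distrib_left power_mult_distrib mult_ac)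
  also have "(\<integral>x. (\<Sum>r\<le>degree p. (coeff p r * (2 ^ j) ^ r) * (x ^ r * \<psi> x)) \<partial>lborel) =
      (\<Sum>r\<le>degree p. (coeff p r * (2 ^ j) ^ r) * (\<integral>x. x ^ r * \<psi> x \<partial>lborel))"
    using psi_moment_integrable by (simp add: integral_sum)
  also have "\<dots> = 0"
    using moments assms(1) by (intro sum.neutral) auto
  finally show ?thesis by simp
qed

lemma filt_h_moment_eq_zero:
  assumes "degree p \<le> m" and moments: "\<forall>r\<le>m. (\<integral>t. t ^ r * \<psi> t \<partial>lborel) = 0"
    and p: "\<forall>t. (\<Sum>\<^sub>\<infinity>k::int. of_int k ^ m * \<phi> (t - of_int k)) = poly p t"
  shows "(\<Sum>l\<in>{-filter_radius j..filter_radius j}. filt_h \<phi> \<psi> j l * of_int l ^ m) = 0"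
proof -
  let ?R = "filter_radius j"
  have pointwise: "(\<Sum>l\<in>{-?R..?R}. of_int l ^ m * (\<phi> (t + of_int l) * \<psi> (2 powr (- real j) * t))) =
      (-1) ^ m * poly p t * \<psi> (2 powr (- real j) * t)" for t
  proof (cases "\<psi> (2 powr (- real j) * t - 0) = 0")
    case False
    then have t: "\<bar>t - of_int 0\<bar> \<le> 2 ^ j * a"
      using scaled_psi_support[of j t 0] by simp
    have "poly p t = (\<Sum>\<^sub>\<infinity>k::int. of_int k ^ m * \<phi> (t - of_int k))"
      using p by simp
    also have "\<dots> = (\<Sum>l\<in>{-?R..?R}. of_int (0 - l) ^ m * \<phi> (t - of_int (0 - l)))"
      by (rule infsum_phi_shifts_eq_sum[OF t])
    also have "\<dots> = (-1) ^ m * (\<Sum>l\<in>{-?R..?R}. of_int l ^ m * \<phi> (t + of_int l))"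
      unfolding sum_distrib_left by (intro sum.cong refl) (simp add: power_minus[of "of_int _"])
    finally have "(-1) ^ m * poly p t =
        ((-1) ^ m * (-1) ^ m) * (\<Sum>l\<in>{-?R..?R}. of_int l ^ m * \<phi> (t + of_int l))"
      by (simp only: mult.assoc)
    also have "(-1 :: real) ^ m * (-1) ^ m = 1"
      by (simp flip: power_add)
    finally show ?thesis
      by (simp add: sum_distrib_right mult.assoc)
  qed simp
  have "integrable lborel (\<lambda>t. \<phi> (t + of_int l) * \<psi> (2 powr (- real j) * t))" for l
    using integrable_phi_shift_mult_psi_affine[of "2 powr (- real j)" "of_int l" 0]
    by (simp add: add.commute)
  then have "(\<Sum>l\<in>{-?R..?R}. filt_h \<phi> \<psi> j l * of_int l ^ m) =
      2 powr (- real j / 2) * (\<integral>t. (-1) ^ m * poly p t * \<psi> (2 powr (- real j) * t) \<partial>lborel)"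
    unfolding filt_h_def pointwise[symmetric]
    by (simp add: integral_sum sum_distrib_left mult_ac)
  also have "\<dots> = 0"
    using integral_poly_mult_psi_scaled[OF assms(1,2)] by (simp add: mult.assoc)
  finally show ?thesis .
qed

end

locale vanishing_moment_wavelet = compact_wavelet \<phi> \<psi> a for \<phi> \<psi> a +
  fixes M :: nat
  assumes psi_moments: "\<forall>m<M. (\<integral>t. t ^ m * \<psi> t \<partial>lborel) = 0"
    and phi_reproduces_polynomials: "\<forall>m<M. \<exists>p :: real poly. degree p = m \<and>
               (\<forall>t. (\<Sum>\<^sub>\<infinity>k::int. real_of_int k ^ m * \<phi> (t - real_of_int k)) = poly p t)"
begin

lemma filt_h_diff_representation:
  assumes "K \<le> M"
  obtains d where "\<And>k. wav_coef X \<phi> \<psi> j k =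
           (\<lambda>\<omega>. \<Sum>l\<in>{-filter_radius j..filter_radius j}. d l * diff_iter K X (2 ^ j * k - l) \<omega>)"
    and "\<And>w. filt_H \<phi> \<psi> j w =
           (1 - exp (- \<i> * of_real w)) ^ K * freq_response d {-filter_radius j..filter_radius j} w"
proof -
  let ?R = "filter_radius j"
  let ?h = "filt_h \<phi> \<psi> j"
  have "(\<Sum>l\<in>{-?R..?R}. ?h l * of_int l ^ m) = 0" if "m < K" for m
  proof -
    have "m < M"
      using \<open>m < K\<close> \<open>K \<le> M\<close> by simp
    then obtain p :: "real poly" where "degree p = m"
        "\<forall>t. (\<Sum>\<^sub>\<infinity>k::int. of_int k ^ m * \<phi> (t - of_int k)) = poly p t"
      using phi_reproduces_polynomials by blast
    moreover have "\<forall>r\<le>m. (\<integral>t. t ^ r * \<psi> t \<partial>lborel) = 0"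
      using psi_moments \<open>m < M\<close> by simp
    ultimately show ?thesis
      by (intro filt_h_moment_eq_zero) auto
  qed
  then obtain d where d: "vanishes_beyond d ?R" and h_eq: "(backward_diff ^^ K) d = ?h"
    using vanishing_moments_imp_backward_diff_pow[OF filt_h_vanishes_beyond filter_radius_nonneg]
    by blast
  have h_sum: "(\<Sum>l\<in>{-?R..?R}. ?h l *\<^sub>R V l) =
      (\<Sum>l\<in>{-?R..?R}. d l *\<^sub>R (backward_diff_adjoint ^^ K) V l)" for V :: "int \<Rightarrow> 'b::real_vector"
    using sum_backward_diff_pow[OF d filter_radius_nonneg, of K V]
      sum_vanishes_beyond_enlarge[OF vanishes_beyond_mult_right[OF filt_h_vanishes_beyond],
        of j "?R + int K" V]
    by (simp add: h_eq)
  show thesis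
  proof (rule that)
    show "wav_coef X \<phi> \<psi> j k =
        (\<lambda>\<omega>. \<Sum>l\<in>{-?R..?R}. d l * diff_iter K X (2 ^ j * k - l) \<omega>)" for k
      using h_sum[of "\<lambda>l. X (2 ^ j * k - l) _"]
      by (simp add: fun_eq_iff wav_coef_eq_filter backward_diff_adjoint_pow_reflected)
    show "filt_H \<phi> \<psi> j w = (1 - exp (- \<i> * of_real w)) ^ K * freq_response d {-?R..?R} w" for w
      using h_sum[of "\<lambda>l. exp (- \<i> * of_real w * of_int l)"]
      unfolding backward_diff_adjoint_pow_exp
      by (simp add: filt_H_eq_freq_response freq_response_def scaleR_conv_of_real
          sum_distrib_left mult_ac)
  qed
qed

lemma covar_wav_coef_spectral:
  fixes j j' :: nat and k k' :: int
  assumes P: "prob_space P" and X: "integrated_process_gsd P X K f" and "K \<le> M"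
  defines "F \<equiv> \<lambda>w. exp (\<i> * of_int (2 ^ j * k - 2 ^ j' * k') * of_real w) *
                  filt_H \<phi> \<psi> j w * cnj (filt_H \<phi> \<psi> j' w) * of_real (f w)"
  shows "set_integrable lborel {-pi..pi} F"
    and "of_real (covar P (wav_coef X \<phi> \<psi> j k) (wav_coef X \<phi> \<psi> j' k')) = (CLBINT w=-pi..pi. F w)"
proof -
  obtain d where d_wav: "\<And>k. wav_coef X \<phi> \<psi> j k =
        (\<lambda>\<omega>. \<Sum>l\<in>{-filter_radius j..filter_radius j}. d l * diff_iter K X (2 ^ j * k - l) \<omega>)"
    and d_H: "\<And>w. filt_H \<phi> \<psi> j w =
        (1 - exp (- \<i> * of_real w)) ^ K * freq_response d {-filter_radius j..filter_radius j} w"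
    using filt_h_diff_representation[OF \<open>K \<le> M\<close>, where j=j and X=X] by blast
  obtain d' where d'_wav: "\<And>k. wav_coef X \<phi> \<psi> j' k =
        (\<lambda>\<omega>. \<Sum>l\<in>{-filter_radius j'..filter_radius j'}. d' l * diff_iter K X (2 ^ j' * k - l) \<omega>)"
    and d'_H: "\<And>w. filt_H \<phi> \<psi> j' w =
        (1 - exp (- \<i> * of_real w)) ^ K * freq_response d' {-filter_radius j'..filter_radius j'} w"
    using filt_h_diff_representation[OF \<open>K \<le> M\<close>, where j=j' and X=X] by blast
  define g where "g w = cmod (1 - exp (- \<i> * of_real w)) ^ (2 * K) * f w" for w
  have stationary: "weakly_stationary_spectral P (diff_iter K X) g"
    using X unfolding integrated_process_gsd_def g_def by blast
  have "of_real (g w) = (1 - exp (- \<i> * of_real w)) ^ K * cnj ((1 - exp (- \<i> * of_real w)) ^ K) *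
      of_real (f w)" for w
    unfolding g_def of_real_mult of_real_norm_power_even ..
  then have integrand: "exp (\<i> * of_int (2 ^ j * k - 2 ^ j' * k') * of_real w) *
      freq_response d {-filter_radius j..filter_radius j} w *
      cnj (freq_response d' {-filter_radius j'..filter_radius j'} w) * of_real (g w) = F w" for w
    unfolding F_def d_H d'_H by (simp add: mult_ac)
  note filtered = covar_filtered_stationary[OF P stationary, where \<alpha>=d and \<beta>=d'
      and A="{-filter_radius j..filter_radius j}" and B="{-filter_radius j'..filter_radius j'}"
      and n="2 ^ j * k" and n'="2 ^ j' * k'", unfolded integrand]
  show "set_integrable lborel {-pi..pi} F"
    by (rule filtered(1))
  show "of_real (covar P (wav_coef X \<phi> \<psi> j k) (wav_coef X \<phi> \<psi> j' k')) = (CLBINT w=-pi..pi. F w)"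
    using filtered(2) unfolding d_wav d'_wav .
qed

end

section \<open>Periodization of spectral integrals\<close>

lemma set_integral_Ioc_affine:
  fixes F :: "real \<Rightarrow> 'b::{banach, second_countable_topology}"
  assumes c: "0 < c" and F: "set_integrable lborel {t + c * a<..t + c * b} F"
  shows "set_integrable lborel {a<..b} (\<lambda>w. F (t + c * w))"
    and "(LINT w:{a<..b}|lborel. F (t + c * w)) =
         (1 / c) *\<^sub>R (LINT x:{t + c * a<..t + c * b}|lborel. F x)"
proof -
  have indicator: "indicator {t + c * a<..t + c * b} (t + c * w) = (indicator {a<..b} w :: real)" for w
    using c by (simp add: indicator_def)
  show "set_integrable lborel {a<..b} (\<lambda>w. F (t + c * w))"
    using lborel_integrable_real_affine[of "\<lambda>x. indicator {t + c * a<..t + c * b} x *\<^sub>R F x" c t] F c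
    unfolding set_integrable_def indicator by simp
  show "(LINT w:{a<..b}|lborel. F (t + c * w)) =
      (1 / c) *\<^sub>R (LINT x:{t + c * a<..t + c * b}|lborel. F x)"
    using lborel_integral_real_affine[of c "\<lambda>x. indicator {t + c * a<..t + c * b} x *\<^sub>R F x" t] c
    unfolding set_lebesgue_integral_def indicator by simp
qed

lemma set_integrable_periodic:
  fixes F :: "real \<Rightarrow> 'b::{banach, second_countable_topology}"
  assumes per: "\<And>x. F (x + 2 * pi) = F x" and F: "set_integrable lborel {-pi..pi} F"
  shows "set_integrable lborel {-pi<..3 * pi} F"
proof -
  have F_Ioc: "set_integrable lborel {-pi<..pi} F"
    by (rule set_integrable_subset[OF F]) auto
  have "set_integrable lborel {pi<..3 * pi} (\<lambda>w. F (- 2 * pi + 1 * w))"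
    using set_integral_Ioc_affine(1)[of 1 "- 2 * pi" pi "3 * pi" F] F_Ioc by simp
  moreover have "F (- 2 * pi + 1 * w) = F w" for w
    using per[of "w - 2 * pi"] by simp
  ultimately have "set_integrable lborel {pi<..3 * pi} F"
    by simp
  then have "set_integrable lborel ({-pi<..pi} \<union> {pi<..3 * pi}) F"
    using F_Ioc by (intro set_integrable_Un) auto
  moreover have "{-pi<..pi} \<union> {pi<..3 * pi} = {-pi<..3 * pi}"
    using pi_gt_zero by auto
  ultimately show ?thesis
    by simp
qed

lemma set_integral_Ioc_split:
  fixes F :: "real \<Rightarrow> 'b::{banach, second_countable_topology}"
  assumes "set_integrable lborel {a<..c} F" "a \<le> b" "b \<le> c"
  shows "(LINT x:{a<..c}|lborel. F x) = (LINT x:{a<..b}|lborel. F x) + (LINT x:{b<..c}|lborel. F x)"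
proof -
  have "set_integrable lborel {a<..b} F" "set_integrable lborel {b<..c} F"
    using assms by (auto intro: set_integrable_subset[OF assms(1)])
  then have "(LINT x:{a<..b} \<union> {b<..c}|lborel. F x) =
      (LINT x:{a<..b}|lborel. F x) + (LINT x:{b<..c}|lborel. F x)"
    by (intro set_integral_Un) auto
  moreover have "{a<..b} \<union> {b<..c} = {a<..c}"
    using assms by auto
  ultimately show ?thesis
    by simp
qed

lemma periodic_set_integral_shift:
  fixes F :: "real \<Rightarrow> 'b::{banach, second_countable_topology}"
  assumes per: "\<And>x. F (x + 2 * pi) = F x" and F: "set_integrable lborel {-pi..pi} F"
    and a: "-pi \<le> a" "a \<le> pi"
  shows "(LINT x:{a<..a + 2 * pi}|lborel. F x) = (LINT x:{-pi<..pi}|lborel. F x)"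
proof -
  have big: "set_integrable lborel {-pi<..3 * pi} F"
    by (rule set_integrable_periodic[OF per F])
  have "set_integrable lborel {pi<..a + 2 * pi} F"
    using a by (intro set_integrable_subset[OF big]) auto
  then have "(LINT x:{pi<..a + 2 * pi}|lborel. F x) = (LINT w:{-pi<..a}|lborel. F (2 * pi + 1 * w))"
    using set_integral_Ioc_affine(2)[of 1 "2 * pi" "-pi" a F] by (simp add: add.commute)
  also have "\<dots> = (LINT w:{-pi<..a}|lborel. F w)"
    using per by (simp add: add.commute)
  finally have shifted: "(LINT x:{pi<..a + 2 * pi}|lborel. F x) = (LINT w:{-pi<..a}|lborel. F w)" .
  have "(LINT x:{a<..a + 2 * pi}|lborel. F x) =
      (LINT x:{a<..pi}|lborel. F x) + (LINT x:{pi<..a + 2 * pi}|lborel. F x)"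
    by (rule set_integral_Ioc_split) (use a in \<open>auto intro: set_integrable_subset[OF big]\<close>)
  also have "\<dots> = (LINT x:{-pi<..a}|lborel. F x) + (LINT x:{a<..pi}|lborel. F x)"
    unfolding shifted by (rule add.commute)
  also have "\<dots> = (LINT x:{-pi<..pi}|lborel. F x)"
    by (rule set_integral_Ioc_split[symmetric]) (use a in \<open>auto intro: set_integrable_subset[OF big]\<close>)
  finally show ?thesis .
qed

lemma sum_set_integral_Ioc_consecutive:
  fixes F :: "real \<Rightarrow> 'b::{banach, second_countable_topology}"
  assumes "mono e" "set_integrable lborel {e 0<..e n} F"
  shows "(\<Sum>l<n. LINT x:{e l<..e (Suc l)}|lborel. F x) = (LINT x:{e 0<..e n}|lborel. F x)"
  using assms(2)
proof (induction n)
  case 0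
  then show ?case by (simp add: set_lebesgue_integral_def)
next
  case (Suc n)
  have "e 0 \<le> e n" "e n \<le> e (Suc n)"
    using \<open>mono e\<close> by (auto simp: mono_def)
  moreover from this have "set_integrable lborel {e 0<..e n} F"
    by (intro set_integrable_subset[OF Suc.prems]) auto
  ultimately show ?case
    using Suc set_integral_Ioc_split[OF Suc.prems, of "e n"] by simp
qed

lemma integral_periodize:
  fixes F :: "real \<Rightarrow> complex"
  assumes per: "\<And>x. F (x + 2 * pi) = F x" and F: "set_integrable lborel {-pi..pi} F" and "0 < J"
  shows "(CLBINT w=-pi..pi. (\<Sum>l<J. F ((w + 2 * real l * pi) / real J)) / real J) =
         (CLBINT w=-pi..pi. F w)"
proof -
  \<comment> \<open>The substitution w = J x - 2 l pi maps the l-th term onto {e l<..e (Suc l)}; these pieces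
      tile the period {e 0<..e 0 + 2 pi}.\<close>
  define e where "e l = (2 * real l - 1) * pi / real J" for l
  have J: "1 \<le> real J"
    using \<open>0 < J\<close> by simp
  have "mono e"
    unfolding e_def mono_def using J by (auto intro!: divide_right_mono)
  have "pi / real J \<le> pi" "0 \<le> pi / real J"
    using J by (simp_all add: divide_le_eq)
  moreover have "e 0 = - (pi / real J)"
    by (simp add: e_def)
  ultimately have e0: "-pi \<le> e 0" "e 0 \<le> pi"
    using pi_gt_zero by linarith+
  have eJ: "e J = e 0 + 2 * pi"
    using J by (simp add: e_def field_simps)
  have F_e: "set_integrable lborel {e 0<..e J} F"
    by (intro set_integrable_subset[OF set_integrable_periodic[OF per F]]) (use e0 eJ in auto)
  have piece: "set_integrable lborel {-pi<..pi} (\<lambda>w. F ((w + 2 * real l * pi) / real J))"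
    "(LINT w:{-pi<..pi}|lborel. F ((w + 2 * real l * pi) / real J)) =
       real J *\<^sub>R (LINT x:{e l<..e (Suc l)}|lborel. F x)"
    if "l < J" for l
  proof -
    have affine: "(w + 2 * real l * pi) / real J = 2 * real l * pi / real J + 1 / real J * w" for w
      by (simp add: add_divide_distrib)
    have ends: "2 * real l * pi / real J + 1 / real J * - pi = e l"
        "2 * real l * pi / real J + 1 / real J * pi = e (Suc l)"
      using J by (simp_all add: e_def field_simps)
    have "set_integrable lborel {e l<..e (Suc l)} F"
      using monoD[OF \<open>mono e\<close>, of 0 l] monoD[OF \<open>mono e\<close>, of "Suc l" J] that
      by (intro set_integrable_subset[OF F_e]) auto
    then show "set_integrable lborel {-pi<..pi} (\<lambda>w. F ((w + 2 * real l * pi) / real J))"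
      "(LINT w:{-pi<..pi}|lborel. F ((w + 2 * real l * pi) / real J)) =
         real J *\<^sub>R (LINT x:{e l<..e (Suc l)}|lborel. F x)"
      using set_integral_Ioc_affine[of "1 / real J" "2 * real l * pi / real J" "-pi" pi F] J
      unfolding affine ends by simp_all
  qed
  have "(CLBINT w=-pi..pi. (\<Sum>l<J. F ((w + 2 * real l * pi) / real J)) / real J) =
      (\<Sum>l<J. LINT w:{-pi<..pi}|lborel. F ((w + 2 * real l * pi) / real J)) / real J"
  proof -
    have "(LINT w:{-pi<..pi}|lborel. (\<Sum>l<J. F ((w + 2 * real l * pi) / real J))) =
        (\<Sum>l<J. LINT w:{-pi<..pi}|lborel. F ((w + 2 * real l * pi) / real J))"
      by (rule set_integral_sum) (simp add: piece(1))
    then show ?thesis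
      by (simp add: interval_integral_Ioc)
  qed
  also have "\<dots> = (\<Sum>l<J. LINT x:{e l<..e (Suc l)}|lborel. F x)"
    using piece(2) J by (simp add: sum_divide_distrib scaleR_conv_of_real)
  also have "\<dots> = (LINT x:{e 0<..e 0 + 2 * pi}|lborel. F x)"
    using sum_set_integral_Ioc_consecutive[OF \<open>mono e\<close> F_e] eJ by simp
  also have "\<dots> = (CLBINT w=-pi..pi. F w)"
    using periodic_set_integral_shift[OF per F e0] by (simp add: interval_integral_Ioc)
  finally show ?thesis .
qed

lemma exp_int_mult_periodic:
  "exp (\<i> * of_int m * of_real (x + 2 * pi * of_int n)) = exp (\<i> * of_int m * of_real x)"
proof -
  have "\<i> * of_int m * of_real (x + 2 * pi * of_int n) =
      \<i> * of_int m * of_real x + \<i> * (of_int (m * n) * (of_real pi * 2))"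
    by (simp add: algebra_simps)
  then show ?thesis
    by (simp only: exp_plus_2pin)
qed

lemma filt_H_periodic: "filt_H \<phi> \<psi> j (x + 2 * pi) = filt_H \<phi> \<psi> j x"
proof -
  have "exp (- \<i> * of_real (x + 2 * pi) * of_int l) = exp (- \<i> * of_real x * of_int l)" for l
    using exp_int_mult_periodic[of "- l" x 1] by (simp add: mult_ac)
  then show ?thesis
    unfolding filt_H_def by simp
qed

section \<open>The folded spectral density\<close>

lemma dyadic_scale_factors:
  "complex_of_real (2 powr (- real u / 2)) * complex_of_real (2 powr (- real j / 2)) *
   complex_of_real (2 powr (- (real j - real u) / 2)) = 1 / of_real (real (2 ^ j))"
proof -
  have "- real u / 2 + - real j / 2 + - (real j - real u) / 2 = - real j"
    by (simp add: field_simps)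
  then have exponents:
    "2 powr (- real u / 2) * 2 powr (- real j / 2) * 2 powr (- (real j - real u) / 2) =
     (2::real) powr (- real j)"
    by (simp only: powr_add[symmetric])
  have "2 powr (- real u / 2) * 2 powr (- real j / 2) * 2 powr (- (real j - real u) / 2) =
      1 / real (2 ^ j)"
    unfolding exponents two_powr_neg by (simp add: divide_inverse)
  then have "complex_of_real (2 powr (- real u / 2) * 2 powr (- real j / 2) *
      2 powr (- (real j - real u) / 2)) = 1 / of_real (real (2 ^ j))"
    by (simp only: of_real_divide of_real_1)
  then show ?thesis
    by (simp only: of_real_mult)
qed

lemma exp_dyadic_phase:
  fixes k k' :: int and i j u l :: nat and w :: real
  assumes "u \<le> j"
  defines "\<zeta> \<equiv> w + 2 * real l * pi"
  shows "exp (\<i> * of_int (2 ^ j * k - 2 ^ (j - u) * (2 ^ u * k' + int i)) *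
              of_real (2 powr (- real j) * \<zeta>)) =
         exp (\<i> * of_int (k - k') * of_real w) *
         exp (- \<i> * of_nat i * of_real (2 powr (- real u) * \<zeta>))"
proof -
  let ?m = "2 ^ j * k - 2 ^ (j - u) * (2 ^ u * k' + int i)"
  define \<xi> where "\<xi> = 2 powr (- real j) * \<zeta>"
  define \<rho> where "\<rho> = 2 powr (- real u) * \<zeta>"
  have "(2::real) ^ (j - u) * 2 ^ u = 2 ^ j"
    using assms by (simp flip: power_add)
  moreover have "(2::real) ^ (j - u) * 2 powr (- real j) = 2 powr (- real u)"
    using assms by (simp add: powr_realpow[symmetric] of_nat_diff flip: powr_add)
  ultimately have real_phase:
    "of_int ?m * \<xi> = of_int (k - k') * (w + 2 * pi * of_int (int l)) - real i * \<rho>"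
    unfolding \<xi>_def \<rho>_def \<zeta>_def two_powr_neg by (simp add: algebra_simps)
  have "\<i> * of_int ?m * of_real \<xi> = \<i> * of_real (of_int ?m * \<xi>)"
    by simp
  also have "\<dots> =
      \<i> * of_int (k - k') * of_real (w + 2 * pi * of_int (int l)) + - \<i> * of_nat i * of_real \<rho>"
    unfolding real_phase by (simp add: algebra_simps)
  finally have exponent: "\<i> * of_int ?m * of_real \<xi> =
      \<i> * of_int (k - k') * of_real (w + 2 * pi * of_int (int l)) + - \<i> * of_nat i * of_real \<rho>" .
  show ?thesis
    unfolding \<xi>_def[symmetric] \<rho>_def[symmetric] exponent exp_add exp_int_mult_periodic ..
qed

lemma D_ju_eq_periodization:
  fixes \<phi> \<psi> f :: "real \<Rightarrow> real" and k k' :: int and i j u :: nat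
  assumes "u \<le> j"
  defines "F \<equiv> \<lambda>x. exp (\<i> * of_int (2 ^ j * k - 2 ^ (j - u) * (2 ^ u * k' + int i)) * of_real x) *
                  filt_H \<phi> \<psi> j x * cnj (filt_H \<phi> \<psi> (j - u) x) * of_real (f x)"
  shows "exp (\<i> * of_int (k - k') * of_real w) * D_ju \<phi> \<psi> f j u i w =
         (\<Sum>l<2 ^ j. F ((w + 2 * real l * pi) / real (2 ^ j))) / real (2 ^ j)"
  unfolding sum_divide_distrib D_ju_def Let_def sum_distrib_left
proof (rule sum.cong[OF refl])
  fix l
  have \<xi>: "(w + 2 * real l * pi) / real (2 ^ j) = 2 powr (- real j) * (w + 2 * real l * pi)"
    unfolding two_powr_neg by (simp add: field_simps)
  have rearrange: "e1 * (c1 * e2 * x * c2 * y * c3 * z) = e1 * e2 * y * z * x * (c1 * c2 * c3)"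
    for e1 e2 c1 c2 c3 x y z :: complex
    by (simp only: mult_ac)
  show "exp (\<i> * of_int (k - k') * of_real w) *
      (of_real (2 powr (- real u / 2)) *
       exp (- \<i> * of_nat i * of_real (2 powr - real u * (w + 2 * real l * pi))) *
       of_real (f (2 powr - real j * (w + 2 * real l * pi))) * of_real (2 powr (- real j / 2)) *
       filt_H \<phi> \<psi> j (2 powr - real j * (w + 2 * real l * pi)) *
       of_real (2 powr (- (real j - real u) / 2)) *
       cnj (filt_H \<phi> \<psi> (j - u) (2 powr - real j * (w + 2 * real l * pi)))) =
      F ((w + 2 * real l * pi) / real (2 ^ j)) / real (2 ^ j)"
    unfolding \<xi> F_def exp_dyadic_phase[OF \<open>u \<le> j\<close>] rearrange dyadic_scale_factors by simp
qed

theorem corollary1: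
  fixes P :: "'a measure" and X :: "int \<Rightarrow> 'a \<Rightarrow> real" and f \<phi> \<psi> :: "real \<Rightarrow> real"
    and K M :: nat and \<alpha> :: real
  assumes P: "prob_space P"
    and X: "integrated_process_gsd P X K f"
    and f_periodic: "\<forall>w. f (w + 2 * pi) = f w"
    and M: "M \<ge> 1" "M \<ge> K" and alpha: "\<alpha> > 1"
    and W1_supp: "\<exists>a. \<forall>t. \<bar>t\<bar> > a \<longrightarrow> \<phi> t = 0 \<and> \<psi> t = 0"
    and W1_int: "integrable lborel \<phi>" "integrable lborel \<psi>"
    and W1_L2: "integrable lborel (\<lambda>t. (\<phi> t)\<^sup>2)" "integrable lborel (\<lambda>t. (\<psi> t)\<^sup>2)"
    and W1_norm: "fourier \<phi> 0 = 1" "(\<integral>t. (\<psi> t)\<^sup>2 \<partial>lborel) = 1"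
    and W2: "\<exists>C. \<forall>\<xi>. cmod (fourier \<psi> \<xi>) * (1 + \<bar>\<xi>\<bar>) powr \<alpha> \<le> C"
    and W3: "\<forall>m<M. (\<integral>t. t ^ m * \<psi> t \<partial>lborel) = 0"
    and W4: "\<forall>m<M. \<exists>p :: real poly. degree p = m \<and>
               (\<forall>t. (\<Sum>\<^sub>\<infinity>k::int. real_of_int k ^ m * \<phi> (t - real_of_int k)) = poly p t)"
  shows "\<forall>j u k k' i. u \<le> j \<longrightarrow> i < 2 ^ u \<longrightarrow>
           complex_of_real (covar P (wav_coef X \<phi> \<psi> j k)
                                    (wav_coef X \<phi> \<psi> (j - u) (2 ^ u * k' + int i))) =
           (CLBINT w=-pi..pi. exp (\<i> * of_int (k - k') * complex_of_real w) * D_ju \<phi> \<psi> f j u i w)"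
proof (intro allI impI)
  fix j u :: nat and k k' :: int and i :: nat
  assume "u \<le> j"
  obtain a where "\<forall>t. \<bar>t\<bar> > a \<longrightarrow> \<phi> t = 0 \<and> \<psi> t = 0"
    using W1_supp by blast
  then interpret vanishing_moment_wavelet \<phi> \<psi> "max a 0" M
    by unfold_locales (auto simp: W1_int W1_L2 W3 W4)
  define F where "F x = exp (\<i> * of_int (2 ^ j * k - 2 ^ (j - u) * (2 ^ u * k' + int i)) * of_real x) *
      filt_H \<phi> \<psi> j x * cnj (filt_H \<phi> \<psi> (j - u) x) * of_real (f x)" for x
  have F_periodic: "F (x + 2 * pi) = F x" for x
    using exp_int_mult_periodic[of "2 ^ j * k - 2 ^ (j - u) * (2 ^ u * k' + int i)" x 1] f_periodic
    by (simp add: F_def filt_H_periodic)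
  note spectral = covar_wav_coef_spectral[OF P X \<open>M \<ge> K\<close>, where j=j and k=k and j'="j - u"
      and k'="2 ^ u * k' + int i", folded F_def]
  have "complex_of_real (covar P (wav_coef X \<phi> \<psi> j k) (wav_coef X \<phi> \<psi> (j - u) (2 ^ u * k' + int i))) =
      (CLBINT w=-pi..pi. F w)"
    by (rule spectral(2))
  also have "\<dots> =
      (CLBINT w=-pi..pi. (\<Sum>l<2 ^ j. F ((w + 2 * real l * pi) / real (2 ^ j))) / real (2 ^ j))"
    by (rule integral_periodize[OF F_periodic spectral(1), symmetric]) simp
  also have "\<dots> = (CLBINT w=-pi..pi. exp (\<i> * of_int (k - k') * of_real w) * D_ju \<phi> \<psi> f j u i w)"
    unfolding D_ju_eq_periodization[OF \<open>u \<le> j\<close>] F_def ..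
  finally show "complex_of_real (covar P (wav_coef X \<phi> \<psi> j k)
      (wav_coef X \<phi> \<psi> (j - u) (2 ^ u * k' + int i))) =
      (CLBINT w=-pi..pi. exp (\<i> * of_int (k - k') * complex_of_real w) * D_ju \<phi> \<psi> f j u i w)" .
qed

end
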